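(* Let $n\ge 1$, $B\in\{1,\dots,n\}$ and $p\in(\tfrac12,1)$, and consider the crowdfunding game $\Gamma(B,n)$ described in the context. Then $\Gamma(B,n)$ has a \emph{unique} symmetric non-trivial Bayes-Nash equilibrium $\sigma=(\sigma_1,\dots,\sigma_n)$. Moreover, there is $\lambda=\lambda(B,n)\in[0,1)$ such that for every player $i$, $\sigma_i(H)=1$ and $\sigma_i(L)=\lambda$.
   Context: The crowdfunding game $\Gamma(B,n)$ with parameter $p\in(\tfrac12,1)$: there are $n$ players $N=\{1,\dots,n\}$ and a threshold $B\in\{1,\dots,n\}$. A state of nature $\omega\in\Omega=\{H,L\}$ is drawn with $\Pr(\omega=H)=\Pr(\omega=L)=\tfrac12$. Conditional on $\omega$, each player $i$ independently receives a private signal $s_i\in\{H,L\}$ with $\Pr(s_i=\omega\mid\omega)=p$. Each player chooses an action $a_i\in\{0,1\}$ (1 = commit to buy, 0 = opt out), simultaneously. Payoffs: $u_i(a,\omega)=1$ if $a_i=1$, $\sum_{j\in N}a_j\ge B$ and $\omega=H$; $u_i(a,\omega)=-1$ if $a_i=1$, $\sum_{j\in N}a_j\ge B$ and $\omega=L$; and $u_i=0$ otherwise. A strategy of player $i$ is a map $\sigma_i:\{H,L\}\to[0,1]$, where $\sigma_i(s)$ is the probability that $i$ plays action $1$ after signal $s$. A Bayes-Nash equilibrium is a profile $\sigma$ such that no player $i$ can increase her expected utility by replacing $\sigma_i$ with any other map $f:\{H,L\}\to\{0,1\}$. A profile $\sigma$ is non-trivial if $\Pr_\sigma(\sum_{i}a_i\ge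 B)>0$, and symmetric if $\sigma_i=\sigma_j$ for all players $i,j$. *)

theory Defs
  imports Complex_Main "HOL-Library.FuncSet"
begin

text \<open>States of nature and signals: H or L. Players are 1..n.
  A strategy profile is sigma :: nat => st => real, sigma i s = probability
  that player i plays action 1 (commit) after signal s.\<close>

datatype st = H | L

definition signal_profiles :: "nat \<Rightarrow> (nat \<Rightarrow> st) set" where
  "signal_profiles n = PiE {1..n} (\<lambda>_. {H, L})"

definition action_profiles :: "nat \<Rightarrow> (nat \<Rightarrow> bool) set" where
  "action_profiles n = PiE {1..n} (\<lambda>_. (UNIV :: bool set))"

definition sig_prob :: "real \<Rightarrow> nat \<Rightarrow> st \<Rightarrow> (nat \<Rightarrow> st) \<Rightarrow> real" where
  "sig_prob p n \<omega> s = (\<Prod>i\<in>{1..n}. if s i = \<omega> then p else 1 - p)"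

text \<open>Probability of an action profile (True = action 1) given the signal profile.\<close>
definition act_prob :: "nat \<Rightarrow> (nat \<Rightarrow> st \<Rightarrow> real) \<Rightarrow> (nat \<Rightarrow> st) \<Rightarrow> (nat \<Rightarrow> bool) \<Rightarrow> real" where
  "act_prob n \<sigma> s a = (\<Prod>i\<in>{1..n}. if a i then \<sigma> i (s i) else 1 - \<sigma> i (s i))"

definition funded :: "nat \<Rightarrow> nat \<Rightarrow> (nat \<Rightarrow> bool) \<Rightarrow> bool" where
  "funded B n a \<longleftrightarrow> B \<le> card {j\<in>{1..n}. a j}"

definition payoff :: "nat \<Rightarrow> nat \<Rightarrow> nat \<Rightarrow> (nat \<Rightarrow> bool) \<Rightarrow> st \<Rightarrow> real" where
  "payoff B n i a \<omega> = (if a i \<and> funded B n a then (if \<omega> = H then 1 else -1) else 0)"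

definition expected_utility ::
  "real \<Rightarrow> nat \<Rightarrow> nat \<Rightarrow> (nat \<Rightarrow> st \<Rightarrow> real) \<Rightarrow> nat \<Rightarrow> real" where
  "expected_utility p B n \<sigma> i =
     (\<Sum>\<omega>\<in>{H, L}. (1/2) * (\<Sum>s\<in>signal_profiles n. sig_prob p n \<omega> s *
        (\<Sum>a\<in>action_profiles n. act_prob n \<sigma> s a * payoff B n i a \<omega>)))"

definition success_prob :: "real \<Rightarrow> nat \<Rightarrow> nat \<Rightarrow> (nat \<Rightarrow> st \<Rightarrow> real) \<Rightarrow> real" where
  "success_prob p B n \<sigma> =
     (\<Sum>\<omega>\<in>{H, L}. (1/2) * (\<Sum>s\<in>signal_profiles n. sig_prob p n \<omega> s *
        (\<Sum>a\<in>action_profiles n. act_prob n \<sigma> s a * (if funded B n a then 1 else 0))))"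

definition strategy_profile :: "nat \<Rightarrow> (nat \<Rightarrow> st \<Rightarrow> real) \<Rightarrow> bool" where
  "strategy_profile n \<sigma> \<longleftrightarrow> (\<forall>i\<in>{1..n}. \<forall>s. 0 \<le> \<sigma> i s \<and> \<sigma> i s \<le> 1)"

definition pure_strategy :: "(st \<Rightarrow> bool) \<Rightarrow> st \<Rightarrow> real" where
  "pure_strategy f = (\<lambda>s. if f s then 1 else 0)"

definition bayes_nash_eq :: "real \<Rightarrow> nat \<Rightarrow> nat \<Rightarrow> (nat \<Rightarrow> st \<Rightarrow> real) \<Rightarrow> bool" where
  "bayes_nash_eq p B n \<sigma> \<longleftrightarrow> strategy_profile n \<sigma> \<and>
     (\<forall>i\<in>{1..n}. \<forall>f. expected_utility p B n (\<sigma>(i := pure_strategy f)) i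
                        \<le> expected_utility p B n \<sigma> i)"

definition nontrivial :: "real \<Rightarrow> nat \<Rightarrow> nat \<Rightarrow> (nat \<Rightarrow> st \<Rightarrow> real) \<Rightarrow> bool" where
  "nontrivial p B n \<sigma> \<longleftrightarrow> success_prob p B n \<sigma> > 0"

definition symmetric_profile :: "nat \<Rightarrow> (nat \<Rightarrow> st \<Rightarrow> real) \<Rightarrow> bool" where
  "symmetric_profile n \<sigma> \<longleftrightarrow> (\<forall>i\<in>{1..n}. \<forall>j\<in>{1..n}. \<sigma> i = \<sigma> j)"

end

theory Submission
  imports Defs
begin

text \<open>
  If every other player commits with probability \<open>q\<^sub>\<omega>\<close> in state \<open>\<omega>\<close>, a player's expected payoff is
  linear in her own strategy, with the coefficient of signal \<open>s\<close> a weighted difference of the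
  probabilities \<open>P(q\<^sub>H)\<close>, \<open>P(q\<^sub>L)\<close> that at least \<open>B - 1\<close> others commit. A symmetric equilibrium is
  thus determined by the signs of these two gains. Since \<open>P\<close> is monotone and \<open>p > 1/2\<close>, a
  non-trivial symmetric equilibrium must commit after \<open>H\<close>, and with probability \<open>\<lambda>\<close> after \<open>L\<close>.
  The gain after \<open>L\<close> is \<open>(1-p) G((1-p)(1-\<lambda>)) - p G(p(1-\<lambda>))\<close> for a binomial distribution
  function \<open>G\<close>; it is negative at \<open>\<lambda> = 1\<close>, so the intermediate value theorem yields an
  equilibrium \<open>\<lambda>\<close>, and since \<open>G(a t) / G(b t)\<close> is strictly increasing in \<open>t\<close> for \<open>a < b\<close>, the gain
  crosses zero at most once, which makes \<open>\<lambda>\<close> unique.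
\<close>

section \<open>Binomial distribution functions\<close>

definition binom_cdf :: "nat \<Rightarrow> nat \<Rightarrow> real \<Rightarrow> real" where
  "binom_cdf m j x = (\<Sum>i\<le>j. real (m choose i) * x^i * (1-x)^(m-i))"

lemma binom_cdf_Suc:
  "binom_cdf m (Suc j) x = binom_cdf m j x + real (m choose Suc j) * x^(Suc j) * (1-x)^(m - Suc j)"
  by (simp add: binom_cdf_def)

lemma binom_cdf_at_0 [simp]: "binom_cdf m j 0 = 1"
  by (induction j) (simp_all add: binom_cdf_def)

lemma binom_cdf_full [simp]: "binom_cdf m m x = 1"
  using binomial_ring[of x "1-x" m] by (simp add: binom_cdf_def)

lemma binom_cdf_pos:
  assumes "0 \<le> x" "x < 1"
  shows "0 < binom_cdf m j x"
proof -
  have "(\<lambda>i. real (m choose i) * x^i * (1-x)^(m-i)) 0 \<le> binom_cdf m j x"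
    unfolding binom_cdf_def using assms by (intro member_le_sum) auto
  moreover have "0 < (1-x)^m" using assms by simp
  ultimately show ?thesis by simp
qed

lemma DERIV_one_minus_power:
  "((\<lambda>x::real. (1-x)^k) has_real_derivative - (real k * (1-x)^(k - 1))) (at x)"
  using DERIV_power[OF DERIV_diff[OF DERIV_const[of 1] DERIV_ident], of k x UNIV] by simp

lemma binom_cdf_deriv:
  assumes "j \<le> m"
  shows "(binom_cdf (Suc m) j has_real_derivative
          - (real (Suc m) * real (m choose j)) * x^j * (1-x)^(m-j)) (at x)"
  using assms
proof (induction j)
  case 0
  have "binom_cdf (Suc m) 0 = (\<lambda>x. (1-x)^(Suc m))" by (simp add: binom_cdf_def fun_eq_iff)
  then show ?case using DERIV_one_minus_power[of "Suc m" x] by (simp add: algebra_simps)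
next
  case (Suc j)
  define c where "c = real (Suc m choose Suc j)"
  have term_deriv: "((\<lambda>x. c * (x^(Suc j) * (1-x)^(m - j))) has_real_derivative
      c * (real (Suc j) * x^j * (1-x)^(m-j) - real (m - j) * (1-x)^(m - Suc j) * x^(Suc j))) (at x)"
    using DERIV_cmult[OF DERIV_mult[OF DERIV_pow[of "Suc j" x] DERIV_one_minus_power[of "m-j" x]], of c]
    by (simp add: algebra_simps)
  have "binom_cdf (Suc m) (Suc j) = (\<lambda>x. binom_cdf (Suc m) j x + c * (x^(Suc j) * (1-x)^(m - j)))"
    by (simp add: binom_cdf_Suc c_def fun_eq_iff mult.assoc)
  then have deriv: "(binom_cdf (Suc m) (Suc j) has_real_derivative
      - (real (Suc m) * real (m choose j)) * x^j * (1-x)^(m-j)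
      + c * (real (Suc j) * x^j * (1-x)^(m-j) - real (m - j) * (1-x)^(m - Suc j) * x^(Suc j))) (at x)"
    using DERIV_add[OF Suc.IH term_deriv] Suc.prems by simp
  have absorb_Suc: "real (Suc j) * c = real (Suc m) * real (m choose j)"
    unfolding c_def by (simp only: of_nat_mult[symmetric] Suc_times_binomial)
  have absorb_comp: "real (m - j) * c = real (Suc m) * real (m choose Suc j)"
    using binomial_absorb_comp[of "Suc m" "Suc j"] unfolding c_def diff_Suc_Suc diff_Suc_1
    by (simp only: of_nat_mult[symmetric])
  have "c * (real (Suc j) * x^j * (1-x)^(m-j) - real (m - j) * (1-x)^(m - Suc j) * x^(Suc j))
      = real (Suc m) * real (m choose j) * x^j * (1-x)^(m-j)
      - real (Suc m) * real (m choose Suc j) * x^(Suc j) * (1-x)^(m - Suc j)"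
    unfolding absorb_Suc[symmetric] absorb_comp[symmetric] by (simp add: algebra_simps)
  with deriv show ?case by simp
qed

lemma binom_cdf_antimono:
  assumes "j \<le> m" "0 \<le> x" "x \<le> y" "y \<le> 1"
  shows "binom_cdf m j y \<le> binom_cdf m j x"
proof (cases "j = m")
  case False
  then obtain m' where m: "m = Suc m'" and j: "j \<le> m'"
    using assms(1) by (cases m) auto
  show ?thesis unfolding m
  proof (rule DERIV_nonpos_imp_nonincreasing[OF assms(3)])
    fix z assume "x \<le> z" "z \<le> y"
    have "(binom_cdf (Suc m') j has_real_derivative
        - (real (Suc m') * real (m' choose j)) * z^j * (1-z)^(m'-j)) (at z)"
      using binom_cdf_deriv[OF j] .
    moreover have "0 \<le> real (Suc m') * real (m' choose j) * z^j * (1-z)^(m'-j)"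
      using \<open>x \<le> z\<close> \<open>z \<le> y\<close> assms by simp
    ultimately show "\<exists>d. (binom_cdf (Suc m') j has_real_derivative d) (at z) \<and> d \<le> 0"
      by force
  qed
qed simp

text \<open>Termwise, the ratio of the two sides is \<open>(x (1-y) / (y (1-x)))^(j+1-i) < 1\<close>.\<close>

lemma binom_cdf_cross_less:
  assumes "j \<le> m" "0 < x" "x < y" "y < 1"
  shows "x^(Suc j) * (1-x)^(m-j) * binom_cdf (Suc m) j y < y^(Suc j) * (1-y)^(m-j) * binom_cdf (Suc m) j x"
proof -
  have "x^(Suc j) * (1-x)^(m-j) * binom_cdf (Suc m) j y =
        (\<Sum>i\<le>j. x^(Suc j) * (1-x)^(m-j) * (real (Suc m choose i) * y^i * (1-y)^(Suc m-i)))"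
    unfolding binom_cdf_def by (simp add: sum_distrib_left)
  also have "\<dots> < (\<Sum>i\<le>j. y^(Suc j) * (1-y)^(m-j) * (real (Suc m choose i) * x^i * (1-x)^(Suc m-i)))"
  proof (rule sum_strict_mono)
    fix i assume "i \<in> {..j}"
    define d where "d = Suc j - i"
    have d: "0 < d" "Suc j = i + d" "Suc m - i = (m - j) + d"
      using \<open>i \<in> {..j}\<close> assms(1) by (auto simp: d_def)
    define K where "K = real (Suc m choose i) * x^i * y^i * (1-x)^(m-j) * (1-y)^(m-j)"
    have "0 < K" unfolding K_def using assms \<open>i \<in> {..j}\<close> by (intro mult_pos_pos) auto
    moreover have "(x * (1-y))^d < (y * (1-x))^d"
      using d assms by (intro power_strict_mono) (auto simp: algebra_simps)
    ultimately have "K * (x * (1-y))^d < K * (y * (1-x))^d" by simp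
    then show "x^(Suc j) * (1-x)^(m-j) * (real (Suc m choose i) * y^i * (1-y)^(Suc m-i))
        < y^(Suc j) * (1-y)^(m-j) * (real (Suc m choose i) * x^i * (1-x)^(Suc m-i))"
      unfolding K_def d(2) d(3) power_add power_mult_distrib by (simp add: algebra_simps)
  qed auto
  also have "\<dots> = y^(Suc j) * (1-y)^(m-j) * binom_cdf (Suc m) j x"
    unfolding binom_cdf_def by (simp add: sum_distrib_left)
  finally show ?thesis .
qed

text \<open>Up to a positive factor, the derivative of the ratio in \<open>t\<close> is the difference of the
  two sides of the cross inequality at \<open>x = a t\<close>, \<open>y = b t\<close>.\<close>

lemma binom_cdf_scaled_ratio_strict_mono:
  assumes j: "j \<le> m" and ab: "0 < a" "a < b" "b < 1" and t: "0 < t1" "t1 < t2" "t2 \<le> 1"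
  shows "binom_cdf (Suc m) j (a*t1) / binom_cdf (Suc m) j (b*t1)
       < binom_cdf (Suc m) j (a*t2) / binom_cdf (Suc m) j (b*t2)"
proof (rule DERIV_pos_imp_increasing[OF t(2)])
  fix t assume "t1 \<le> t" "t \<le> t2"
  define G where "G = binom_cdf (Suc m) j"
  define c where "c = real (Suc m) * real (m choose j)"
  have "0 < c" unfolding c_def using j by simp
  have t0: "0 < t" "t \<le> 1" using \<open>t1 \<le> t\<close> \<open>t \<le> t2\<close> t by auto
  have x: "0 < a*t" "a*t < b*t" "b*t < 1" using ab t0
    by (auto intro: order.strict_trans1[OF mult_right_le_one_le])
  have dA: "((\<lambda>t. G (a*t)) has_real_derivative (- c * (a*t)^j * (1-a*t)^(m-j)) * a) (at t)"
    unfolding G_def c_def using DERIV_chain'[OF DERIV_cmult[OF DERIV_ident] binom_cdf_deriv[OF j]] by simp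
  have dB: "((\<lambda>t. G (b*t)) has_real_derivative (- c * (b*t)^j * (1-b*t)^(m-j)) * b) (at t)"
    unfolding G_def c_def using DERIV_chain'[OF DERIV_cmult[OF DERIV_ident] binom_cdf_deriv[OF j]] by simp
  have GB: "0 < G (b*t)" unfolding G_def using x by (intro binom_cdf_pos) auto
  define N where "N = (- c * (a*t)^j * (1-a*t)^(m-j)) * a * G (b*t)
        - G (a*t) * ((- c * (b*t)^j * (1-b*t)^(m-j)) * b)"
  have "t * N = c * ((b*t)^(Suc j) * (1-b*t)^(m-j) * G (a*t) - (a*t)^(Suc j) * (1-a*t)^(m-j) * G (b*t))"
    unfolding N_def power_Suc by (simp add: algebra_simps)
  moreover have "(a*t)^(Suc j) * (1-a*t)^(m-j) * G (b*t) < (b*t)^(Suc j) * (1-b*t)^(m-j) * G (a*t)"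
    unfolding G_def using binom_cdf_cross_less[OF j x] .
  ultimately have "0 < t * N" using \<open>0 < c\<close> by simp
  then have "0 < N" using t0 by (simp add: zero_less_mult_iff)
  have "((\<lambda>t. G (a*t) / G (b*t)) has_real_derivative N / (G (b*t) * G (b*t))) (at t)"
    unfolding N_def using GB by (intro DERIV_divide[OF dA dB]) auto
  moreover have "0 < N / (G (b*t) * G (b*t))" using \<open>0 < N\<close> GB by simp
  ultimately show "\<exists>y. ((\<lambda>t. binom_cdf (Suc m) j (a*t) / binom_cdf (Suc m) j (b*t))
      has_real_derivative y) (at t) \<and> 0 < y"
    unfolding G_def by blast
qed

definition binom_tail :: "nat \<Rightarrow> nat \<Rightarrow> real \<Rightarrow> real" where
  "binom_tail m k q = (\<Sum>l\<le>m. real (m choose l) * q^l * (1-q)^(m-l) * (if k \<le> l then 1 else 0))"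

lemma binom_tail_eq_binom_cdf:
  assumes "k \<le> m"
  shows "binom_tail m k q = binom_cdf m (m - k) (1 - q)"
proof -
  define g where "g = (\<lambda>l. real (m choose l) * q^l * (1-q)^(m-l))"
  have "binom_tail m k q = (\<Sum>l\<le>m. if k \<le> l then g l else 0)"
    unfolding binom_tail_def g_def by (intro sum.cong) auto
  also have "\<dots> = (\<Sum>l\<in>{l\<in>{..m}. k \<le> l}. g l)"
    by (rule sum.inter_filter[symmetric]) simp
  also have "{l\<in>{..m}. k \<le> l} = {k..m}" by auto
  also have "(\<Sum>l\<in>{k..m}. g l) = (\<Sum>i\<le>m-k. g (m - i))"
    by (rule sum.reindex_bij_witness[of _ "\<lambda>l. m - l" "\<lambda>i. m - i"]) (use assms in auto)
  also have "\<dots> = binom_cdf m (m - k) (1 - q)"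
    unfolding binom_cdf_def g_def
  proof (intro sum.cong refl)
    fix i assume "i \<in> {..m - k}"
    then have "i \<le> m" by simp
    then show "real (m choose (m - i)) * q^(m - i) * (1-q)^(m - (m - i))
        = real (m choose i) * (1-q)^i * (1 - (1-q))^(m - i)"
      by (simp add: binomial_symmetric[symmetric] mult_ac)
  qed
  finally show ?thesis .
qed

lemma binom_tail_nonneg: "0 \<le> q \<Longrightarrow> q \<le> 1 \<Longrightarrow> 0 \<le> binom_tail m k q"
  unfolding binom_tail_def by (intro sum_nonneg) auto

lemma binom_tail_pos: "0 < q \<Longrightarrow> q \<le> 1 \<Longrightarrow> k \<le> m \<Longrightarrow> 0 < binom_tail m k q"
  by (simp add: binom_tail_eq_binom_cdf binom_cdf_pos)

lemma binom_tail_at_0: "1 \<le> k \<Longrightarrow> binom_tail m k 0 = 0"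
  unfolding binom_tail_def by (intro sum.neutral) auto

lemma binom_tail_mono:
  "k \<le> m \<Longrightarrow> 0 \<le> q \<Longrightarrow> q \<le> q' \<Longrightarrow> q' \<le> 1 \<Longrightarrow> binom_tail m k q \<le> binom_tail m k q'"
  by (simp add: binom_tail_eq_binom_cdf binom_cdf_antimono)

section \<open>Expected payoffs\<close>

definition signal_prob :: "real \<Rightarrow> st \<Rightarrow> st \<Rightarrow> real" where
  "signal_prob p \<omega> s = (if s = \<omega> then p else 1 - p)"

definition commit_prob :: "real \<Rightarrow> (st \<Rightarrow> real) \<Rightarrow> st \<Rightarrow> real" where
  "commit_prob p \<tau> \<omega> = signal_prob p \<omega> H * \<tau> H + signal_prob p \<omega> L * \<tau> L"

lemma commit_prob_H: "commit_prob p \<tau> H = p * \<tau> H + (1-p) * \<tau> L"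
  by (simp add: commit_prob_def signal_prob_def)

lemma commit_prob_L: "commit_prob p \<tau> L = (1-p) * \<tau> H + p * \<tau> L"
  by (simp add: commit_prob_def signal_prob_def)

lemma commit_prob_bounds:
  assumes "0 \<le> p" "p \<le> 1" "\<And>s. 0 \<le> \<tau> s \<and> \<tau> s \<le> 1"
  shows "0 \<le> commit_prob p \<tau> \<omega>" "commit_prob p \<tau> \<omega> \<le> 1"
proof -
  have w: "0 \<le> signal_prob p \<omega> s" "signal_prob p \<omega> H + signal_prob p \<omega> L = 1" for s
    using assms(1,2) by (cases \<omega>; simp add: signal_prob_def)+
  then show "0 \<le> commit_prob p \<tau> \<omega>"
    unfolding commit_prob_def using assms(3) by simp
  have "commit_prob p \<tau> \<omega> \<le> signal_prob p \<omega> H + signal_prob p \<omega> L"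
    unfolding commit_prob_def using w(1) assms(3) by (intro add_mono mult_left_le) auto
  then show "commit_prob p \<tau> \<omega> \<le> 1" using w(2) by simp
qed

lemma all_st_iff: "(\<forall>s. P s) \<longleftrightarrow> P H \<and> P L"
  by (metis st.exhaust)

text \<open>Players act independently given the state, each committing with probability
  \<open>commit_prob p (\<sigma> j) \<omega>\<close> after the signal has been averaged out.\<close>

lemma sum_signal_profiles_marginal:
  "(\<Sum>s\<in>signal_profiles n. sig_prob p n \<omega> s * (\<Sum>a\<in>action_profiles n. act_prob n \<sigma> s a * F a))
   = (\<Sum>a\<in>action_profiles n. F a *
        (\<Prod>j\<in>{1..n}. if a j then commit_prob p (\<sigma> j) \<omega> else 1 - commit_prob p (\<sigma> j) \<omega>))"
proof -
  define v where "v = (\<lambda>j x (b::bool). if b then \<sigma> j x else 1 - \<sigma> j x)"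
  have "(\<Sum>s\<in>signal_profiles n. sig_prob p n \<omega> s * (\<Sum>a\<in>action_profiles n. act_prob n \<sigma> s a * F a))
      = (\<Sum>s\<in>signal_profiles n. \<Sum>a\<in>action_profiles n.
           F a * (\<Prod>j\<in>{1..n}. signal_prob p \<omega> (s j) * v j (s j) (a j)))"
    unfolding sig_prob_def act_prob_def v_def signal_prob_def
    by (simp add: sum_distrib_left prod.distrib mult_ac)
  also have "\<dots> = (\<Sum>a\<in>action_profiles n. F a *
      (\<Sum>s\<in>PiE {1..n} (\<lambda>_. {H, L}). \<Prod>j\<in>{1..n}. signal_prob p \<omega> (s j) * v j (s j) (a j)))"
    unfolding signal_profiles_def by (subst sum.swap) (simp add: sum_distrib_left)
  also have "\<dots> = (\<Sum>a\<in>action_profiles n. F a *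
      (\<Prod>j\<in>{1..n}. \<Sum>x\<in>{H, L}. signal_prob p \<omega> x * v j x (a j)))"
    by (intro sum.cong refl arg_cong2[where f="(*)"] prod_sum_PiE[symmetric]) auto
  also have "\<dots> = (\<Sum>a\<in>action_profiles n. F a *
      (\<Prod>j\<in>{1..n}. if a j then commit_prob p (\<sigma> j) \<omega> else 1 - commit_prob p (\<sigma> j) \<omega>))"
    by (intro sum.cong refl arg_cong2[where f="(*)"] prod.cong)
       (cases \<omega>; auto simp: v_def signal_prob_def commit_prob_def algebra_simps)
  finally show ?thesis .
qed

lemma sum_PiE_bool_eq_sum_Pow:
  assumes "finite I"
  shows "(\<Sum>a\<in>PiE I (\<lambda>_. UNIV::bool set). g a) = (\<Sum>S\<in>Pow I. g (restrict (\<lambda>j. j \<in> S) I))"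
proof -
  have "restrict (\<lambda>j. j \<in> {j\<in>I. a j}) I = a" if "a \<in> PiE I (\<lambda>_. UNIV::bool set)" for a
    using that by (auto simp: PiE_def extensional_def restrict_def fun_eq_iff)
  then show ?thesis
    by (intro sum.reindex_bij_witness[of _ "\<lambda>S. restrict (\<lambda>j. j \<in> S) I" "\<lambda>a. {j\<in>I. a j}"])
       (auto simp: restrict_def)
qed

lemma Collect_restrict_mem: "S \<subseteq> I \<Longrightarrow> {j\<in>I. restrict (\<lambda>j. j \<in> S) I j} = S"
  by auto

lemma sum_signal_profiles_Pow:
  "(\<Sum>s\<in>signal_profiles n. sig_prob p n \<omega> s * (\<Sum>a\<in>action_profiles n. act_prob n \<sigma> s a * F a))
   = (\<Sum>S\<in>Pow {1..n}. F (restrict (\<lambda>j. j \<in> S) {1..n}) *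
        (\<Prod>j\<in>{1..n}. if j \<in> S then commit_prob p (\<sigma> j) \<omega> else 1 - commit_prob p (\<sigma> j) \<omega>))"
  unfolding sum_signal_profiles_marginal unfolding action_profiles_def
  by (subst sum_PiE_bool_eq_sum_Pow) (auto intro!: sum.cong prod.cong)

lemma sum_Pow_bernoulli_card:
  assumes "finite I"
  shows "(\<Sum>S\<in>Pow I. (\<Prod>j\<in>I. if j \<in> S then q else 1 - q) * F (card S))
    = (\<Sum>l\<le>card I. real (card I choose l) * q^l * (1-q)^(card I - l) * F l)"
proof -
  have "(\<Sum>S\<in>Pow I. (\<Prod>j\<in>I. if j \<in> S then q else 1 - q) * F (card S))
      = (\<Sum>S\<in>Pow I. q^(card S) * (1-q)^(card I - card S) * F (card S))"
  proof (rule sum.cong[OF refl])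
    fix S assume "S \<in> Pow I"
    then have "S \<subseteq> I" "finite S" using assms finite_subset by auto
    have "(\<Prod>j\<in>I. if j \<in> S then q else 1 - q) = (\<Prod>j\<in>I \<inter> S. q) * (\<Prod>j\<in>I - S. 1 - q)"
      using prod.If_cases[OF assms, of "\<lambda>j. j \<in> S" "\<lambda>_. q" "\<lambda>_. 1 - q"]
      by (simp add: Diff_eq)
    also have "\<dots> = q^(card S) * (1-q)^(card I - card S)"
      using \<open>S \<subseteq> I\<close> \<open>finite S\<close> by (simp add: Int_absorb1 card_Diff_subset)
    finally show "(\<Prod>j\<in>I. if j \<in> S then q else 1 - q) * F (card S)
        = q^(card S) * (1-q)^(card I - card S) * F (card S)" by simp
  qed
  also have "\<dots> = (\<Sum>l\<le>card I. \<Sum>S\<in>{S\<in>Pow I. card S = l}. q^(card S) * (1-q)^(card I - card S) * F (card S))"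
    by (rule sum.group[symmetric]) (use assms in \<open>auto intro: card_mono\<close>)
  also have "\<dots> = (\<Sum>l\<le>card I. real (card I choose l) * q^l * (1-q)^(card I - l) * F l)"
  proof (rule sum.cong[OF refl])
    fix l
    have "(\<Sum>S\<in>{S\<in>Pow I. card S = l}. q^(card S) * (1-q)^(card I - card S) * F (card S))
        = real (card {S. S \<subseteq> I \<and> card S = l}) * (q^l * (1-q)^(card I - l) * F l)"
      by simp
    then show "(\<Sum>S\<in>{S\<in>Pow I. card S = l}. q^(card S) * (1-q)^(card I - card S) * F (card S))
        = real (card I choose l) * q^l * (1-q)^(card I - l) * F l"
      by (simp add: n_subsets[OF assms] mult_ac)
  qed
  finally show ?thesis .
qed

lemma sum_Pow_insert_mem:
  assumes "finite J" "i \<notin> J"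
  shows "(\<Sum>S\<in>Pow (insert i J). if i \<in> S then g S else 0) = (\<Sum>T\<in>Pow J. g (insert i T))"
proof -
  have "(\<Sum>S\<in>Pow (insert i J). if i \<in> S then g S else 0)
      = (\<Sum>S\<in>Pow J. if i \<in> S then g S else 0) + (\<Sum>S\<in>insert i ` Pow J. if i \<in> S then g S else 0)"
    unfolding Pow_insert using assms by (intro sum.union_disjoint) auto
  also have "(\<Sum>S\<in>Pow J. if i \<in> S then g S else 0) = 0"
    using assms by (intro sum.neutral) auto
  also have "(\<Sum>S\<in>insert i ` Pow J. if i \<in> S then g S else 0) = (\<Sum>T\<in>Pow J. g (insert i T))"
    using assms by (subst sum.reindex) (auto simp: inj_on_def)
  finally show ?thesis by simp
qed

lemma conditional_payoff_eq:
  assumes i: "i \<in> {1..n}" and others: "\<forall>j\<in>{1..n}. j \<noteq> i \<longrightarrow> \<sigma> j = \<tau>"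
  shows "(\<Sum>s\<in>signal_profiles n. sig_prob p n \<omega> s *
            (\<Sum>a\<in>action_profiles n. act_prob n \<sigma> s a * payoff B n i a \<omega>))
    = (if \<omega> = H then 1 else -1) * commit_prob p (\<sigma> i) \<omega> * binom_tail (n-1) (B-1) (commit_prob p \<tau> \<omega>)"
proof -
  define u :: real where "u = (if \<omega> = H then 1 else -1)"
  define r where "r = (\<lambda>j. commit_prob p (\<sigma> j) \<omega>)"
  define q where "q = commit_prob p \<tau> \<omega>"
  define J where "J = {1..n} - {i}"
  have IJ: "{1..n} = insert i J" and "i \<notin> J" "finite J" "card J = n - 1"
    using i by (auto simp: J_def)
  define g where "g = (\<lambda>S. (if B \<le> card S then u else 0) * (\<Prod>j\<in>{1..n}. if j \<in> S then r j else 1 - r j))"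
  have "(\<Sum>s\<in>signal_profiles n. sig_prob p n \<omega> s *
            (\<Sum>a\<in>action_profiles n. act_prob n \<sigma> s a * payoff B n i a \<omega>))
      = (\<Sum>S\<in>Pow {1..n}. if i \<in> S then g S else 0)"
    unfolding sum_signal_profiles_Pow
  proof (intro sum.cong refl)
    fix S assume "S \<in> Pow {1..n}"
    then have "{j\<in>{1..n}. restrict (\<lambda>j. j \<in> S) {1..n} j} = S" by (intro Collect_restrict_mem) simp
    with i show "payoff B n i (restrict (\<lambda>j. j \<in> S) {1..n}) \<omega> *
        (\<Prod>j\<in>{1..n}. if j \<in> S then commit_prob p (\<sigma> j) \<omega> else 1 - commit_prob p (\<sigma> j) \<omega>)
      = (if i \<in> S then g S else 0)"
      unfolding payoff_def funded_def g_def u_def r_def by auto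
  qed
  also have "\<dots> = (\<Sum>T\<in>Pow J. g (insert i T))"
    unfolding IJ using \<open>finite J\<close> \<open>i \<notin> J\<close> by (rule sum_Pow_insert_mem)
  also have "\<dots> = u * r i * (\<Sum>T\<in>Pow J. (\<Prod>j\<in>J. if j \<in> T then q else 1 - q) *
      (if B - 1 \<le> card T then 1 else 0))"
    unfolding sum_distrib_left
  proof (rule sum.cong[OF refl])
    fix T assume "T \<in> Pow J"
    then have "card (insert i T) = Suc (card T)"
      using \<open>i \<notin> J\<close> \<open>finite J\<close> by (auto intro: card_insert_disjoint finite_subset)
    moreover have "(\<Prod>j\<in>J. if j \<in> insert i T then r j else 1 - r j) = (\<Prod>j\<in>J. if j \<in> T then q else 1 - q)"
      using \<open>i \<notin> J\<close> others by (intro prod.cong) (auto simp: r_def q_def J_def)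
    ultimately show "g (insert i T) = u * r i * ((\<Prod>j\<in>J. if j \<in> T then q else 1 - q) *
        (if B - 1 \<le> card T then 1 else 0))"
      unfolding g_def IJ using \<open>i \<notin> J\<close> \<open>finite J\<close> by auto
  qed
  also have "\<dots> = u * r i * binom_tail (n-1) (B-1) q"
    unfolding binom_tail_def \<open>card J = n - 1\<close>[symmetric]
    using sum_Pow_bernoulli_card[OF \<open>finite J\<close>, where F="\<lambda>l. if B - 1 \<le> l then 1 else 0"] by simp
  finally show ?thesis by (simp add: u_def r_def q_def)
qed

text \<open>Twice the expected payoff of committing after signal \<open>s\<close> when all other players use \<open>\<tau>\<close>:
  a commitment pays off only if at least \<open>B - 1\<close> of the other \<open>n - 1\<close> players commit too.\<close>

definition commit_gain :: "real \<Rightarrow> nat \<Rightarrow> nat \<Rightarrow> (st \<Rightarrow> real) \<Rightarrow> st \<Rightarrow> real" where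
  "commit_gain p B n \<tau> s =
     signal_prob p H s * binom_tail (n-1) (B-1) (commit_prob p \<tau> H)
     - signal_prob p L s * binom_tail (n-1) (B-1) (commit_prob p \<tau> L)"

lemma commit_gain_H:
  "commit_gain p B n \<tau> H = p * binom_tail (n-1) (B-1) (commit_prob p \<tau> H)
     - (1-p) * binom_tail (n-1) (B-1) (commit_prob p \<tau> L)"
  by (simp add: commit_gain_def signal_prob_def)

lemma commit_gain_L:
  "commit_gain p B n \<tau> L = (1-p) * binom_tail (n-1) (B-1) (commit_prob p \<tau> H)
     - p * binom_tail (n-1) (B-1) (commit_prob p \<tau> L)"
  by (simp add: commit_gain_def signal_prob_def)

lemma expected_utility_eq:
  assumes "i \<in> {1..n}" and "\<forall>j\<in>{1..n}. j \<noteq> i \<longrightarrow> \<sigma> j = \<tau>"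
  shows "expected_utility p B n \<sigma> i
    = 1/2 * (\<sigma> i H * commit_gain p B n \<tau> H + \<sigma> i L * commit_gain p B n \<tau> L)"
proof -
  have "expected_utility p B n \<sigma> i = 1/2 *
      (commit_prob p (\<sigma> i) H * binom_tail (n-1) (B-1) (commit_prob p \<tau> H)
       - commit_prob p (\<sigma> i) L * binom_tail (n-1) (B-1) (commit_prob p \<tau> L))"
    unfolding expected_utility_def conditional_payoff_eq[OF assms] by simp
  then show ?thesis
    unfolding commit_gain_def commit_prob_H[of p "\<sigma> i"] commit_prob_L[of p "\<sigma> i"]
    by (simp add: signal_prob_def algebra_simps)
qed

lemma success_prob_symmetric:
  assumes "\<forall>j\<in>{1..n}. \<sigma> j = \<tau>"
  shows "success_prob p B n \<sigma>
    = 1/2 * (binom_tail n B (commit_prob p \<tau> H) + binom_tail n B (commit_prob p \<tau> L))"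
proof -
  have "(\<Sum>s\<in>signal_profiles n. sig_prob p n \<omega> s *
          (\<Sum>a\<in>action_profiles n. act_prob n \<sigma> s a * (if funded B n a then 1 else 0)))
      = binom_tail n B (commit_prob p \<tau> \<omega>)" for \<omega>
  proof -
    have "(\<Sum>s\<in>signal_profiles n. sig_prob p n \<omega> s *
          (\<Sum>a\<in>action_profiles n. act_prob n \<sigma> s a * (if funded B n a then 1 else 0)))
      = (\<Sum>S\<in>Pow {1..n}. (\<Prod>j\<in>{1..n}. if j \<in> S then commit_prob p \<tau> \<omega> else 1 - commit_prob p \<tau> \<omega>)
            * (if B \<le> card S then 1 else 0))"
      unfolding sum_signal_profiles_Pow
    proof (intro sum.cong refl)
      fix S assume "S \<in> Pow {1..n}"
      then have S: "S \<subseteq> {1..n}" by simp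
      have "(\<Prod>j\<in>{1..n}. if j \<in> S then commit_prob p (\<sigma> j) \<omega> else 1 - commit_prob p (\<sigma> j) \<omega>)
          = (\<Prod>j\<in>{1..n}. if j \<in> S then commit_prob p \<tau> \<omega> else 1 - commit_prob p \<tau> \<omega>)"
        using assms by (intro prod.cong) auto
      then show "(if funded B n (restrict (\<lambda>j. j \<in> S) {1..n}) then 1 else 0) *
          (\<Prod>j\<in>{1..n}. if j \<in> S then commit_prob p (\<sigma> j) \<omega> else 1 - commit_prob p (\<sigma> j) \<omega>)
        = (\<Prod>j\<in>{1..n}. if j \<in> S then commit_prob p \<tau> \<omega> else 1 - commit_prob p \<tau> \<omega>)
            * (if B \<le> card S then 1 else 0)"
        unfolding funded_def Collect_restrict_mem[OF S] by simp
    qed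
    then show ?thesis
      unfolding binom_tail_def
      using sum_Pow_bernoulli_card[of "{1..n}" "commit_prob p \<tau> \<omega>" "\<lambda>l. if B \<le> l then 1 else 0"]
      by simp
  qed
  then show ?thesis
    unfolding success_prob_def by simp
qed

section \<open>Symmetric equilibria\<close>

lemma mixed_gain_le_max: "0 \<le> t \<Longrightarrow> t \<le> 1 \<Longrightarrow> t * c \<le> max c (0::real)"
  by (cases "0 \<le> c") (auto simp: max_def mult_left_le_one_le mult_nonneg_nonpos)

lemma mixed_gain_eq_max_iff:
  "0 \<le> t \<Longrightarrow> t \<le> 1 \<Longrightarrow> t * c = max c (0::real) \<longleftrightarrow> (0 < c \<longrightarrow> t = 1) \<and> (c < 0 \<longrightarrow> t = 0)"
  by (cases "0 < c"; cases "c < 0") (auto simp: max_def)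

lemma expected_utility_symmetric_deviation:
  assumes "i \<in> {1..n}" and "\<forall>j\<in>{1..n}. \<sigma> j = \<tau>"
  shows "expected_utility p B n (\<sigma>(i := f)) i
    = 1/2 * (f H * commit_gain p B n \<tau> H + f L * commit_gain p B n \<tau> L)"
  using expected_utility_eq[of i n "\<sigma>(i := f)" \<tau>] assms by simp

definition best_reply_to_self :: "real \<Rightarrow> nat \<Rightarrow> nat \<Rightarrow> (st \<Rightarrow> real) \<Rightarrow> bool" where
  "best_reply_to_self p B n \<tau> \<longleftrightarrow> (\<forall>s. 0 \<le> \<tau> s \<and> \<tau> s \<le> 1 \<and>
     (0 < commit_gain p B n \<tau> s \<longrightarrow> \<tau> s = 1) \<and> (commit_gain p B n \<tau> s < 0 \<longrightarrow> \<tau> s = 0))"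

lemma expected_utility_symmetric:
  assumes "i \<in> {1..n}" and sym: "\<forall>j\<in>{1..n}. \<sigma> j = \<tau>"
  shows "expected_utility p B n \<sigma> i
    = 1/2 * (\<tau> H * commit_gain p B n \<tau> H + \<tau> L * commit_gain p B n \<tau> L)"
  using expected_utility_symmetric_deviation[OF assms, where f=\<tau>] assms by (simp add: fun_upd_idem)

text \<open>The pure deviation committing exactly after the signals with positive gain is a best reply;
  a mixed strategy does as well iff it agrees with it wherever the gain is nonzero.\<close>

lemma bayes_nash_eq_imp_best_reply_to_self:
  assumes bne: "bayes_nash_eq p B n \<sigma>" and "1 \<le> n" and sym: "\<forall>j\<in>{1..n}. \<sigma> j = \<tau>"
  shows "best_reply_to_self p B n \<tau>"
proof -
  let ?c = "commit_gain p B n \<tau>"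
  have "1 \<in> {1..n}" using assms(2) by simp
  then have range: "0 \<le> \<tau> s \<and> \<tau> s \<le> 1" for s
    using bne sym unfolding bayes_nash_eq_def strategy_profile_def by auto
  have best_reply: "pure_strategy (\<lambda>s. 0 < ?c s) s * ?c s = max (?c s) 0" for s
    by (simp add: pure_strategy_def max_def)
  have "expected_utility p B n (\<sigma>(1 := pure_strategy (\<lambda>s. 0 < ?c s))) 1 \<le> expected_utility p B n \<sigma> 1"
    using bne \<open>1 \<in> {1..n}\<close> unfolding bayes_nash_eq_def by blast
  then have "max (?c H) 0 + max (?c L) 0 \<le> \<tau> H * ?c H + \<tau> L * ?c L"
    unfolding expected_utility_symmetric_deviation[OF \<open>1 \<in> {1..n}\<close> sym]
      expected_utility_symmetric[OF \<open>1 \<in> {1..n}\<close> sym] best_reply by simp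
  moreover have "\<tau> s * ?c s \<le> max (?c s) 0" for s
    by (rule mixed_gain_le_max) (use range[of s] in auto)
  ultimately have "\<tau> H * ?c H = max (?c H) 0 \<and> \<tau> L * ?c L = max (?c L) 0"
    by (smt (verit))
  then have "\<tau> s * ?c s = max (?c s) 0" for s by (cases s) auto
  then show ?thesis
    unfolding best_reply_to_self_def using range mixed_gain_eq_max_iff[of "\<tau> _" "?c _"] by simp
qed

lemma best_reply_to_self_imp_bayes_nash_eq:
  assumes "best_reply_to_self p B n \<tau>" and sym: "\<forall>j\<in>{1..n}. \<sigma> j = \<tau>"
  shows "bayes_nash_eq p B n \<sigma>"
proof -
  let ?c = "commit_gain p B n \<tau>"
  have cond: "0 \<le> \<tau> s \<and> \<tau> s \<le> 1 \<and> \<tau> s * ?c s = max (?c s) 0" for s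
    using assms(1) mixed_gain_eq_max_iff[of "\<tau> s" "?c s"] unfolding best_reply_to_self_def by auto
  have gain_le: "pure_strategy f s * ?c s \<le> \<tau> s * ?c s" for f s
    using mixed_gain_le_max[of "pure_strategy f s" "?c s"] cond[of s]
    by (simp add: pure_strategy_def)
  have "expected_utility p B n (\<sigma>(i := pure_strategy f)) i \<le> expected_utility p B n \<sigma> i"
    if "i \<in> {1..n}" for i f
    unfolding expected_utility_symmetric_deviation[OF that sym] expected_utility_symmetric[OF that sym]
    by (intro mult_left_mono add_mono gain_le) simp
  moreover have "strategy_profile n \<sigma>"
    unfolding strategy_profile_def using cond sym by simp
  ultimately show ?thesis
    unfolding bayes_nash_eq_def by blast
qed

lemma bayes_nash_eq_symmetric_iff:
  "1 \<le> n \<Longrightarrow> \<forall>j\<in>{1..n}. \<sigma> j = \<tau> \<Longrightarrow> bayes_nash_eq p B n \<sigma> \<longleftrightarrow> best_reply_to_self p B n \<tau>"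
  using bayes_nash_eq_imp_best_reply_to_self best_reply_to_self_imp_bayes_nash_eq by blast

lemma bayes_nash_eq_const_iff:
  "1 \<le> n \<Longrightarrow> bayes_nash_eq p B n (\<lambda>_. \<tau>) \<longleftrightarrow> best_reply_to_self p B n \<tau>"
  by (rule bayes_nash_eq_symmetric_iff) auto

section \<open>Cutoff strategies\<close>

lemma weighted_gap_pos:
  fixes p x y :: real
  assumes "0 < x" "y \<le> x" "1/2 < p" "p \<le> 1"
  shows "(1-p) * y < p * x"
proof -
  have "(1-p) * y \<le> (1-p) * x" using assms by (simp add: mult_left_mono)
  also have "\<dots> < p * x" using assms by simp
  finally show ?thesis .
qed

definition cutoff_strategy :: "real \<Rightarrow> st \<Rightarrow> real" where
  "cutoff_strategy l s = (if s = H then 1 else l)"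

locale crowdfunding =
  fixes p :: real and B n :: nat
  assumes B_pos: "1 \<le> B" and B_le_n: "B \<le> n" and p_gt_half: "1/2 < p" and p_lt_1: "p < 1"
begin

lemma n_pos: "1 \<le> n"
  using B_pos B_le_n by simp

text \<open>The probability that at least \<open>B - 1\<close> of the other \<open>n - 1\<close> players commit, when each
  of them independently abstains with probability \<open>x\<close>.\<close>

abbreviation pivotal :: "real \<Rightarrow> real" where
  "pivotal \<equiv> binom_cdf (n - 1) (n - B)"

lemma binom_tail_pivotal: "binom_tail (n-1) (B-1) q = pivotal (1 - q)"
  using binom_tail_eq_binom_cdf[of "B-1" "n-1" q] B_pos B_le_n by simp

lemma commit_gain_cutoff:
  "commit_gain p B n (cutoff_strategy l) H = p * pivotal ((1-p)*(1-l)) - (1-p) * pivotal (p*(1-l))"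
  "commit_gain p B n (cutoff_strategy l) L = (1-p) * pivotal ((1-p)*(1-l)) - p * pivotal (p*(1-l))"
proof -
  have "1 - commit_prob p (cutoff_strategy l) H = (1-p)*(1-l)"
    "1 - commit_prob p (cutoff_strategy l) L = p*(1-l)"
    by (simp_all add: commit_prob_H commit_prob_L cutoff_strategy_def algebra_simps)
  then show "commit_gain p B n (cutoff_strategy l) H = p * pivotal ((1-p)*(1-l)) - (1-p) * pivotal (p*(1-l))"
    "commit_gain p B n (cutoff_strategy l) L = (1-p) * pivotal ((1-p)*(1-l)) - p * pivotal (p*(1-l))"
    unfolding commit_gain_H commit_gain_L binom_tail_pivotal by simp_all
qed

lemma pivotal_pos:
  assumes "0 \<le> l" "l \<le> 1"
  shows "0 < pivotal (p*(1-l))"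
proof -
  have "p * (1-l) < 1"
    using mult_right_le_one_le[of p "1-l"] assms p_gt_half p_lt_1 by linarith
  then show ?thesis
    using assms p_gt_half by (intro binom_cdf_pos) auto
qed

lemma commit_gain_cutoff_H_pos:
  assumes "0 \<le> l" "l \<le> 1"
  shows "0 < commit_gain p B n (cutoff_strategy l) H"
proof -
  have "0 < pivotal (p*(1-l))"
    using assms by (rule pivotal_pos)
  moreover have "p * (1-l) \<le> 1"
    using mult_right_le_one_le[of p "1-l"] assms p_gt_half p_lt_1 by linarith
  then have "pivotal (p*(1-l)) \<le> pivotal ((1-p)*(1-l))"
    using assms B_pos p_gt_half p_lt_1 by (intro binom_cdf_antimono) (auto intro: mult_right_mono)
  ultimately have "(1-p) * pivotal (p*(1-l)) < p * pivotal ((1-p)*(1-l))"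
    using p_gt_half p_lt_1 by (intro weighted_gap_pos) auto
  then show ?thesis
    unfolding commit_gain_cutoff by simp
qed

lemma commit_gain_cutoff_1_L_neg: "commit_gain p B n (cutoff_strategy 1) L < 0"
  using p_gt_half by (simp add: commit_gain_cutoff)

lemma continuous_on_commit_gain_cutoff_L:
  "continuous_on A (\<lambda>l. commit_gain p B n (cutoff_strategy l) L)"
  unfolding commit_gain_cutoff binom_cdf_def by (intro continuous_intros)

text \<open>Single crossing, from the ratio monotonicity of the binomial distribution function.\<close>

lemma commit_gain_cutoff_L_pos_below_root:
  assumes l: "0 \<le> l1" "l1 < l2" "l2 < 1" and root: "commit_gain p B n (cutoff_strategy l2) L = 0"
  shows "0 < commit_gain p B n (cutoff_strategy l1) L"
proof (cases "n - B = n - 1")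
  case True
  then show ?thesis
    using root p_gt_half unfolding commit_gain_cutoff by simp
next
  case False
  then obtain m where m: "n - 1 = Suc m" and "n - B \<le> m"
    using B_pos B_le_n by (cases "n - 1") auto
  have pos: "0 < pivotal (p*(1-l1))" "0 < pivotal (p*(1-l2))"
    using pivotal_pos[of l1] pivotal_pos[of l2] l by auto
  have "pivotal ((1-p)*(1-l2)) / pivotal (p*(1-l2)) < pivotal ((1-p)*(1-l1)) / pivotal (p*(1-l1))"
    unfolding m using binom_cdf_scaled_ratio_strict_mono[OF \<open>n - B \<le> m\<close>, of "1-p" p "1-l2" "1-l1"]
      l p_gt_half p_lt_1 by auto
  moreover have "pivotal ((1-p)*(1-l2)) / pivotal (p*(1-l2)) = p / (1-p)"
    using root pos p_lt_1 unfolding commit_gain_cutoff by (simp add: field_simps)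
  ultimately have "p / (1-p) < pivotal ((1-p)*(1-l1)) / pivotal (p*(1-l1))"
    by simp
  then have "p * pivotal (p*(1-l1)) < (1-p) * pivotal ((1-p)*(1-l1))"
    using pos p_lt_1 by (simp add: divide_less_eq less_divide_eq mult.commute)
  then show ?thesis
    unfolding commit_gain_cutoff by simp
qed

lemma bayes_nash_eq_cutoff_iff:
  "bayes_nash_eq p B n (\<lambda>_. cutoff_strategy l) \<longleftrightarrow>
     0 \<le> l \<and> l < 1 \<and> commit_gain p B n (cutoff_strategy l) L \<le> 0 \<and>
     (0 < l \<longrightarrow> commit_gain p B n (cutoff_strategy l) L = 0)"
proof -
  have "0 < commit_gain p B n (cutoff_strategy l) H" if "0 \<le> l" "l \<le> 1"
    using commit_gain_cutoff_H_pos that by blast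
  moreover note commit_gain_cutoff_1_L_neg
  ultimately have "bayes_nash_eq p B n (\<lambda>_. cutoff_strategy l) \<longleftrightarrow>
     0 \<le> l \<and> l \<le> 1 \<and> (0 < commit_gain p B n (cutoff_strategy l) L \<longrightarrow> l = 1) \<and>
     (commit_gain p B n (cutoff_strategy l) L < 0 \<longrightarrow> l = 0)"
    by (auto simp: bayes_nash_eq_const_iff[OF n_pos] best_reply_to_self_def all_st_iff cutoff_strategy_def)
  with commit_gain_cutoff_1_L_neg show ?thesis
    by (cases "l = 1") auto
qed

lemma ex_bayes_nash_eq_cutoff: "\<exists>l. bayes_nash_eq p B n (\<lambda>_. cutoff_strategy l)"
proof (cases "commit_gain p B n (cutoff_strategy 0) L \<le> 0")
  case True
  then show ?thesis
    using bayes_nash_eq_cutoff_iff[of 0] by auto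
next
  case False
  then obtain l where "0 \<le> l" "l \<le> 1" "commit_gain p B n (cutoff_strategy l) L = 0"
    using IVT2'[of "\<lambda>l. commit_gain p B n (cutoff_strategy l) L" 1 0 0]
      commit_gain_cutoff_1_L_neg continuous_on_commit_gain_cutoff_L by auto
  moreover from this have "l \<noteq> 1"
    using commit_gain_cutoff_1_L_neg by auto
  ultimately show ?thesis
    using bayes_nash_eq_cutoff_iff[of l] by auto
qed

lemma bayes_nash_eq_cutoff_unique:
  assumes "bayes_nash_eq p B n (\<lambda>_. cutoff_strategy l1)" "bayes_nash_eq p B n (\<lambda>_. cutoff_strategy l2)"
  shows "l1 = l2"
proof -
  have False if "bayes_nash_eq p B n (\<lambda>_. cutoff_strategy l)"
    "bayes_nash_eq p B n (\<lambda>_. cutoff_strategy l')" "l < l'" for l l'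
    using that commit_gain_cutoff_L_pos_below_root[of l l'] unfolding bayes_nash_eq_cutoff_iff by auto
  then show ?thesis
    using assms by (cases l1 l2 rule: linorder_cases) auto
qed

lemma nontrivial_cutoff:
  assumes "0 \<le> l" "l \<le> 1"
  shows "nontrivial p B n (\<lambda>_. cutoff_strategy l)"
proof -
  have range: "0 \<le> commit_prob p (cutoff_strategy l) \<omega>" "commit_prob p (cutoff_strategy l) \<omega> \<le> 1" for \<omega>
    using assms p_gt_half p_lt_1 by (intro commit_prob_bounds; simp add: cutoff_strategy_def)+
  have "0 < commit_prob p (cutoff_strategy l) H"
    using assms p_gt_half p_lt_1 by (simp add: commit_prob_H cutoff_strategy_def add_pos_nonneg)
  then have "0 < binom_tail n B (commit_prob p (cutoff_strategy l) H)"
    using range B_le_n by (intro binom_tail_pos) auto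
  moreover have "0 \<le> binom_tail n B (commit_prob p (cutoff_strategy l) L)"
    using range by (intro binom_tail_nonneg)
  ultimately show ?thesis
    unfolding nontrivial_def by (simp add: success_prob_symmetric[of n _ "cutoff_strategy l"])
qed

text \<open>Since \<open>q\<^sub>H - q\<^sub>L = (2p - 1)(\<tau> H - \<tau> L)\<close>, committing after \<open>L\<close> more often than after \<open>H\<close>
  would make the gain after \<open>L\<close> negative; so \<open>q\<^sub>L \<le> q\<^sub>H\<close>, and then the gain after \<open>H\<close> is positive.\<close>

lemma best_reply_to_self_commits_after_H:
  assumes best: "best_reply_to_self p B n \<tau>" and "0 < commit_prob p \<tau> L"
  shows "\<tau> H = 1"
proof -
  let ?T = "binom_tail (n-1) (B-1)"
  have cond: "0 \<le> \<tau> s" "\<tau> s \<le> 1" "0 < commit_gain p B n \<tau> s \<Longrightarrow> \<tau> s = 1"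
    "commit_gain p B n \<tau> s < 0 \<Longrightarrow> \<tau> s = 0" for s
    using best unfolding best_reply_to_self_def by auto
  have range: "0 \<le> commit_prob p \<tau> \<omega>" "commit_prob p \<tau> \<omega> \<le> 1" for \<omega>
    using cond p_gt_half p_lt_1 by (intro commit_prob_bounds; simp)+
  have "0 < ?T (commit_prob p \<tau> L)"
    using assms(2) range B_le_n by (intro binom_tail_pos) auto
  have diff: "commit_prob p \<tau> H - commit_prob p \<tau> L = (2*p - 1) * (\<tau> H - \<tau> L)"
    by (simp add: commit_prob_H commit_prob_L algebra_simps)
  have "\<tau> L \<le> \<tau> H"
  proof (rule ccontr)
    assume "\<not> \<tau> L \<le> \<tau> H"
    then have "(2*p - 1) * (\<tau> H - \<tau> L) \<le> 0"
      using p_gt_half by (intro mult_nonneg_nonpos) auto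
    then have "?T (commit_prob p \<tau> H) \<le> ?T (commit_prob p \<tau> L)"
      using diff range B_pos B_le_n by (intro binom_tail_mono) auto
    then have "(1-p) * ?T (commit_prob p \<tau> H) < p * ?T (commit_prob p \<tau> L)"
      using \<open>0 < ?T (commit_prob p \<tau> L)\<close> p_gt_half p_lt_1 by (intro weighted_gap_pos) auto
    then have "\<tau> L = 0"
      by (intro cond(4)) (simp add: commit_gain_L)
    with \<open>\<not> \<tau> L \<le> \<tau> H\<close> cond(1) show False by auto
  qed
  then have "0 \<le> (2*p - 1) * (\<tau> H - \<tau> L)"
    using p_gt_half by simp
  then have "?T (commit_prob p \<tau> L) \<le> ?T (commit_prob p \<tau> H)"
    using diff range B_pos B_le_n by (intro binom_tail_mono) auto
  then have "(1-p) * ?T (commit_prob p \<tau> L) < p * ?T (commit_prob p \<tau> H)"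
    using \<open>0 < ?T (commit_prob p \<tau> L)\<close> p_gt_half p_lt_1 by (intro weighted_gap_pos) auto
  then show "\<tau> H = 1"
    by (intro cond(3)) (simp add: commit_gain_H)
qed

lemma symmetric_bayes_nash_eq_cutoff:
  assumes bne: "bayes_nash_eq p B n \<sigma>" and "symmetric_profile n \<sigma>" and "nontrivial p B n \<sigma>"
  obtains l where "bayes_nash_eq p B n (\<lambda>_. cutoff_strategy l)" "\<forall>i\<in>{1..n}. \<sigma> i = cutoff_strategy l"
proof -
  have "1 \<in> {1..n}" using n_pos by simp
  define \<tau> where "\<tau> = \<sigma> 1"
  have sym: "\<forall>j\<in>{1..n}. \<sigma> j = \<tau>"
    using assms(2) \<open>1 \<in> {1..n}\<close> unfolding symmetric_profile_def \<tau>_def by blast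
  have best: "best_reply_to_self p B n \<tau>"
    using bne bayes_nash_eq_symmetric_iff[OF n_pos sym] by blast
  then have range: "0 \<le> \<tau> s" "\<tau> s \<le> 1" for s
    unfolding best_reply_to_self_def by auto
  have "\<not> (\<tau> H = 0 \<and> \<tau> L = 0)"
  proof
    assume "\<tau> H = 0 \<and> \<tau> L = 0"
    then have "success_prob p B n \<sigma> = 0"
      unfolding success_prob_symmetric[OF sym] using B_pos
      by (simp add: commit_prob_H commit_prob_L binom_tail_at_0)
    with \<open>nontrivial p B n \<sigma>\<close> show False unfolding nontrivial_def by simp
  qed
  then have "0 < commit_prob p \<tau> L"
    using range[of H] range[of L] p_gt_half p_lt_1
    by (auto simp: commit_prob_L add_pos_nonneg add_nonneg_pos)
  then have "\<tau> = cutoff_strategy (\<tau> L)"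
    using best_reply_to_self_commits_after_H[OF best] by (auto simp: cutoff_strategy_def fun_eq_iff all_st_iff)
  moreover have "bayes_nash_eq p B n (\<lambda>_. \<tau>)"
    using best by (simp add: bayes_nash_eq_const_iff[OF n_pos])
  ultimately show thesis
    using that[of "\<tau> L"] sym by simp
qed

end

theorem theorem1:
  fixes n B :: nat and p :: real
  assumes "1 \<le> n" and "1 \<le> B" and "B \<le> n" and "1/2 < p" and "p < 1"
  shows "\<exists>lam::real. 0 \<le> lam \<and> lam < 1 \<and>
    (let \<sigma> = (\<lambda>(_::nat) s. if s = H then 1 else lam) in
       bayes_nash_eq p B n \<sigma> \<and> symmetric_profile n \<sigma> \<and> nontrivial p B n \<sigma>) \<and>
    (\<forall>\<sigma>. bayes_nash_eq p B n \<sigma> \<and> symmetric_profile n \<sigma> \<and> nontrivial p B n \<sigma> \<longrightarrow>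
       (\<forall>i\<in>{1..n}. \<sigma> i H = 1 \<and> \<sigma> i L = lam))"
proof -
  interpret crowdfunding p B n
    using assms by unfold_locales
  obtain lam where bne: "bayes_nash_eq p B n (\<lambda>_. cutoff_strategy lam)"
    using ex_bayes_nash_eq_cutoff by blast
  then have "0 \<le> lam" "lam < 1"
    unfolding bayes_nash_eq_cutoff_iff by auto
  have unique: "\<sigma> i H = 1 \<and> \<sigma> i L = lam"
    if eq: "bayes_nash_eq p B n \<sigma>" "symmetric_profile n \<sigma>" "nontrivial p B n \<sigma>"
      and i: "i \<in> {1..n}" for \<sigma> i
  proof -
    obtain l where "bayes_nash_eq p B n (\<lambda>_. cutoff_strategy l)" "\<forall>i\<in>{1..n}. \<sigma> i = cutoff_strategy l"
      using symmetric_bayes_nash_eq_cutoff[OF eq] by blast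
    moreover from this(1) have "l = lam"
      using bayes_nash_eq_cutoff_unique bne by blast
    ultimately show ?thesis
      using i by (simp add: cutoff_strategy_def)
  qed
  have "(\<lambda>(_::nat) s. if s = H then 1 else lam) = (\<lambda>_. cutoff_strategy lam)"
    by (simp add: cutoff_strategy_def fun_eq_iff)
  moreover have "nontrivial p B n (\<lambda>_. cutoff_strategy lam)"
    using \<open>0 \<le> lam\<close> \<open>lam < 1\<close> by (intro nontrivial_cutoff) auto
  ultimately have "let \<sigma> = (\<lambda>(_::nat) s. if s = H then 1 else lam) in
      bayes_nash_eq p B n \<sigma> \<and> symmetric_profile n \<sigma> \<and> nontrivial p B n \<sigma>"
    using bne by (simp add: symmetric_profile_def)
  with \<open>0 \<le> lam\<close> \<open>lam < 1\<close> unique show ?thesis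
    by blast
qed

end
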